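(* Let $u,v\in(0,1)$. (1) For any $s\le2$ with $s\ne1$, $$K_s^+(u,v)\ge K_2^+(u,v)\Big[1-(1-v)\Big(1-\big(\tfrac vu\big)^{2-s}\Big)\Big].$$ (2) For $s=1$, $K_1^+(u,v)\ge K_2^+(u,v)\cdot\frac vu$.
   Context: For $s\in\mathbb{R}$, $\phi_s(x)=x\log x-x+1$ if $s=1$; $\phi_s(x)=\frac{1-s+sx-x^s}{s(1-s)}$ if $s\ne0,1$; $\phi_s(x)=-\log x+x-1$ if $s=0$. $K_s(u,v)=v\,\phi_s(u/v)+(1-v)\,\phi_s\big(\frac{1-u}{1-v}\big)$ (the $\phi_s$-divergence between $\mathrm{Ber}(u)$ and $\mathrm{Ber}(v)$), and $K_s^+(u,v)=K_s(u,v)$ if $0<v<u<1$, $K_s^+(u,v)=0$ otherwise. In particular $K_2(u,v)=\frac{(u-v)^2}{2v(1-v)}$. *)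

theory Defs
  imports Complex_Main
begin

definition phi :: "real \<Rightarrow> real \<Rightarrow> real" where
  "phi s x = (if s = 1 then x * ln x - x + 1
              else if s = 0 then - ln x + x - 1
              else (1 - s + s * x - x powr s) / (s * (1 - s)))"

definition K :: "real \<Rightarrow> real \<Rightarrow> real \<Rightarrow> real" where
  "K s u v = v * phi s (u / v) + (1 - v) * phi s ((1 - u) / (1 - v))"

definition Kplus :: "real \<Rightarrow> real \<Rightarrow> real \<Rightarrow> real" where
  "Kplus s u v = (if 0 < v \<and> v < u \<and> u < 1 then K s u v else 0)"

end

theory Submission imports Defs begin

text \<open>For fixed \<open>v\<close>, the map \<open>w \<mapsto> K s w v\<close> vanishes together with its derivative at
  \<open>w = v\<close>, and its second derivative is \<open>(w/v) powr (s-2) / v + ((1-w)/(1-v)) powr (s-2) / (1-v)\<close>.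
  For \<open>s \<le> 2\<close> and \<open>v \<le> w \<le> u\<close> the first summand is at least \<open>(v/u) powr (2-s) / v\<close> and
  the second at least \<open>1/(1-v)\<close>, so integrating twice bounds \<open>K s u v\<close> below by \<open>(u-v)\<^sup>2/2\<close>
  times the sum of these constants, which is exactly the right-hand side of (1), since
  \<open>K 2 u v = (u-v)\<^sup>2 / (2 v (1-v))\<close>. Part (2) is the instance \<open>s = 1\<close> of this bound,
  weakened using \<open>v < u\<close>.\<close>

lemma quadratic_lower_bound_second_deriv:
  fixes f f' f'' :: "real \<Rightarrow> real"
  assumes "a \<le> b"
    and f': "\<And>x. a \<le> x \<Longrightarrow> x \<le> b \<Longrightarrow> (f has_real_derivative f' x) (at x)"
    and f'': "\<And>x. a \<le> x \<Longrightarrow> x \<le> b \<Longrightarrow> (f' has_real_derivative f'' x) (at x)"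
    and lower: "\<And>x. a \<le> x \<Longrightarrow> x \<le> b \<Longrightarrow> c \<le> f'' x"
  shows "f a + f' a * (b - a) + c * (b - a)\<^sup>2 / 2 \<le> f b"
proof -
  define h where "h x = f x - f' a * (x - a) - c * (x - a)\<^sup>2 / 2" for x
  define h' where "h' x = f' x - f' a - c * (x - a)" for x
  have dh: "(h has_real_derivative h' x) (at x)" if "a \<le> x" "x \<le> b" for x
    unfolding h_def h'_def using f'[OF that] by (auto intro!: derivative_eq_intros)
  have h'_nonneg: "0 \<le> h' x" if "a \<le> x" "x \<le> b" for x
  proof -
    have "h' a \<le> h' x"
    proof (rule DERIV_nonneg_imp_nondecreasing[OF \<open>a \<le> x\<close>])
      fix y assume "a \<le> y" "y \<le> x"
      then show "\<exists>y'. (h' has_real_derivative y') (at y) \<and> 0 \<le> y'"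
        using that f''[of y] lower[of y] unfolding h'_def
        by (auto intro!: exI[of _ "f'' y - c"] derivative_eq_intros)
    qed
    then show ?thesis by (simp add: h'_def)
  qed
  have "h a \<le> h b"
    using DERIV_nonneg_imp_nondecreasing[OF \<open>a \<le> b\<close>, of h] dh h'_nonneg by blast
  then show ?thesis by (simp add: h_def)
qed

definition dphi :: "real \<Rightarrow> real \<Rightarrow> real" where
  "dphi s x = (if s = 1 then ln x else (1 - x powr (s - 1)) / (1 - s))"

lemma DERIV_phi:
  assumes "0 < x"
  shows "(phi s has_real_derivative dphi s x) (at x)"
proof -
  consider "s = 1" | "s = 0" | "s \<noteq> 0" "s \<noteq> 1" by blast
  then show ?thesis
  proof cases
    case 1
    then have "phi s = (\<lambda>x. x * ln x - x + 1)" by (auto simp: phi_def fun_eq_iff)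
    then show ?thesis
      using 1 assms by (auto intro!: derivative_eq_intros simp: dphi_def)
  next
    case 2
    then have "phi s = (\<lambda>x. - ln x + x - 1)" by (auto simp: phi_def fun_eq_iff)
    then show ?thesis
      using 2 assms
      by (auto intro!: derivative_eq_intros simp: dphi_def powr_minus_divide field_simps)
  next
    case 3
    then have "phi s = (\<lambda>x. (1 - s + s * x - x powr s) / (s * (1 - s)))"
      by (auto simp: phi_def fun_eq_iff)
    then show ?thesis
      using 3 assms
      by (auto intro!: derivative_eq_intros simp: dphi_def divide_simps)
         (simp add: algebra_simps)
  qed
qed

lemma DERIV_dphi:
  assumes "0 < x"
  shows "(dphi s has_real_derivative x powr (s - 2)) (at x)"
proof (cases "s = 1")
  case True
  then have "dphi s = ln" by (auto simp: dphi_def fun_eq_iff)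
  then show ?thesis
    using True assms by (auto intro!: derivative_eq_intros simp: powr_minus_divide)
next
  case False
  then have "dphi s = (\<lambda>x. (1 - x powr (s - 1)) / (1 - s))" by (auto simp: dphi_def fun_eq_iff)
  then show ?thesis
    using False assms
    by (auto intro!: derivative_eq_intros simp: divide_simps) (simp add: algebra_simps)
qed

lemma DERIV_phi_chain [derivative_intros]:
  "(f has_real_derivative f') (at x within S) \<Longrightarrow> 0 < f x \<Longrightarrow>
    ((\<lambda>x. phi s (f x)) has_real_derivative dphi s (f x) * f') (at x within S)"
  by (rule DERIV_chain2[OF DERIV_phi])

lemma DERIV_dphi_chain [derivative_intros]:
  "(f has_real_derivative f') (at x within S) \<Longrightarrow> 0 < f x \<Longrightarrow>
    ((\<lambda>x. dphi s (f x)) has_real_derivative f x powr (s - 2) * f') (at x within S)"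
  by (rule DERIV_chain2[OF DERIV_dphi])

lemma DERIV_K_fst:
  assumes "0 < w" "w < 1" "0 < v" "v < 1"
  shows "((\<lambda>w. K s w v) has_real_derivative dphi s (w / v) - dphi s ((1 - w) / (1 - v))) (at w)"
  unfolding K_def using assms
  by (auto intro!: derivative_eq_intros simp: divide_simps) (simp add: algebra_simps)

lemma DERIV_dphi_difference:
  assumes "0 < w" "w < 1" "0 < v" "v < 1"
  shows "((\<lambda>w. dphi s (w / v) - dphi s ((1 - w) / (1 - v))) has_real_derivative
           (w / v) powr (s - 2) / v + ((1 - w) / (1 - v)) powr (s - 2) / (1 - v)) (at w)"
  using assms
  by (auto intro!: derivative_eq_intros simp: divide_simps) (simp add: algebra_simps)

lemma powr_divide_swap: "(x / y) powr a = (y / x) powr (- a :: real)"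
  by (simp only: powr_minus flip: inverse_powr) simp

lemma K_ge_quadratic:
  assumes "0 < v" "v < u" "u < 1" "s \<le> 2"
  shows "(u - v)\<^sup>2 / 2 * ((v / u) powr (2 - s) / v + 1 / (1 - v)) \<le> K s u v"
proof -
  define c where "c = (v / u) powr (2 - s) / v + 1 / (1 - v)"
  define K' where "K' = (\<lambda>w. dphi s (w / v) - dphi s ((1 - w) / (1 - v)))"
  define K'' where
    "K'' = (\<lambda>w. (w / v) powr (s - 2) / v + ((1 - w) / (1 - v)) powr (s - 2) / (1 - v))"
  have "c \<le> K'' w" if "v \<le> w" "w \<le> u" for w
  proof -
    have "(v / u) powr (2 - s) = (u / v) powr (s - 2)"
      using powr_divide_swap[of v u "2 - s"] by simp
    also have "\<dots> \<le> (w / v) powr (s - 2)"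
      using that assms by (intro powr_mono2') (auto simp: field_simps)
    finally have "(v / u) powr (2 - s) / v \<le> (w / v) powr (s - 2) / v"
      using assms by (simp add: divide_right_mono)
    moreover have "1 \<le> ((1 - w) / (1 - v)) powr (s - 2)"
      using that assms powr_mono2'[of "s - 2" "(1 - w) / (1 - v)" 1] by (auto simp: field_simps)
    then have "1 / (1 - v) \<le> ((1 - w) / (1 - v)) powr (s - 2) / (1 - v)"
      using assms by (simp add: divide_right_mono)
    ultimately show ?thesis unfolding c_def K''_def by linarith
  qed
  then have "K s v v + K' v * (u - v) + c * (u - v)\<^sup>2 / 2 \<le> K s u v"
    using assms
    by (intro quadratic_lower_bound_second_deriv[of v u _ K' K''])
       (auto simp: K'_def K''_def intro!: DERIV_K_fst DERIV_dphi_difference)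
  moreover have "K s v v = 0" "K' v = 0"
    using assms by (simp_all add: K_def phi_def K'_def dphi_def)
  ultimately show ?thesis by (simp add: c_def mult.commute)
qed

lemma K_2:
  assumes "0 < v" "v < 1" "0 < u" "u < 1"
  shows "K 2 u v = (u - v)\<^sup>2 / 2 * (1 / v + 1 / (1 - v))"
  using assms
  by (simp add: K_def phi_def powr_numeral field_simps) (simp add: algebra_simps power2_eq_square)

theorem lemmaA11:
  fixes u v :: real
  assumes "0 < u" "u < 1" "0 < v" "v < 1"
  shows "(\<forall>s::real. s \<le> 2 \<and> s \<noteq> 1 \<longrightarrow>
            Kplus s u v \<ge> Kplus 2 u v * (1 - (1 - v) * (1 - (v / u) powr (2 - s))))
       \<and> Kplus 1 u v \<ge> Kplus 2 u v * (v / u)"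
proof (cases "v < u")
  case False
  then show ?thesis by (simp add: Kplus_def)
next
  case True
  have bound: "Kplus 2 u v * (1 - (1 - v) * (1 - (v / u) powr (2 - s))) \<le> Kplus s u v"
    if "s \<le> 2" for s
  proof -
    have "Kplus 2 u v * (1 - (1 - v) * (1 - (v / u) powr (2 - s)))
        = (u - v)\<^sup>2 / 2 * ((v / u) powr (2 - s) / v + 1 / (1 - v))"
      using True assms by (simp add: Kplus_def K_2 field_simps)
    also have "\<dots> \<le> K s u v" using True assms that by (intro K_ge_quadratic) auto
    finally show ?thesis using True assms by (simp add: Kplus_def)
  qed
  have "v / u \<le> 1 - (1 - v) * (1 - v / u)"
    using True assms by (simp add: field_simps mult_left_le)
  moreover have "0 \<le> Kplus 2 u v" using True assms by (simp add: Kplus_def K_2)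
  ultimately have "Kplus 2 u v * (v / u) \<le> Kplus 2 u v * (1 - (1 - v) * (1 - v / u))"
    by (rule mult_left_mono)
  also have "\<dots> \<le> Kplus 1 u v" using bound[of 1] assms by simp
  finally show ?thesis using bound by auto
qed

end
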